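(* Fix $i\in\{1,\dots,k\}$ and let $\pi_i$ and $\mathcal{M}^\pi_i$ be defined as in the context. Then $|\mathcal{M}^\pi_i|\le 3\epsilon\cdot 2^{kn}$.
   Context: Setting. $\mathcal{N}$ is a directed network containing nodes $s_1,\dots,s_k,t_1,\dots,t_k$. The network $\mathcal{G}$ is obtained from $\mathcal{N}$ by adding new nodes $s,t,A_1,\dots,A_k,B_1,\dots,B_k$ and, for each $i$, the unit-capacity edges $a_i=(s,A_i)$, two parallel edges $x_i,y_i$ from $A_i$ to $B_i$, $z_i=(A_i,s_i)$, $z'_i=(t_i,B_i)$, and $b_i=(B_i,t)$; the incoming edges of $t$ are exactly $b_1,\dots,b_k$. Admissible error patterns $\boldsymbol r=(r_e)$ are those in which at most one edge $e$ has $r_e\neq0$, with $e\notin\{a_1,\dots,a_k,b_1,\dots,b_k\}$. The output of an edge is its input XOR $r_e$. Let $\mathcal{C}$ be a length-$n$ network code on $\mathcal{G}$. The source $s$ has message $m\in[2^{kn}]$, where $[N]=\{1,\dots,N\}$. An edge $e=(u,v)$ of capacity $c_e$ carries a value in $[2^{nc_e}]$ computed from the signals on the incoming edges of $u$ (and from $m$ if $u=s$). The terminal $t$ decodes the tuple received on $(b_1,\dots,b_k)$ to a message. For an edge $e$, $e(m,\boldsymbol r)$ is the signal received on $e$ under message $m$ and error pattern $\boldsymbol r$, and $e(m)=e(m,\boldsymbol 0)$. Let $\mathcal{M}^{\text{good}}$ be the set of messages $m$ such that $t$ decodes to $m$ under every admissible error pattern when $m$ is sent. Assume $\epsilon\ge0$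 and $|\mathcal{M}^{\text{good}}|\ge(1-\epsilon)2^{kn}$. Define $\pi_i:[2^n]\to[2^n]$ by letting $\pi_i(\hat b)$ be a value $\hat a$ maximizing $|\{m\in\mathcal{M}^{\text{good}}:a_i(m)=\hat a,\ b_i(m)=\hat b\}|$, with ties broken arbitrarily. Let $\mathcal{M}^\pi_i=\{m\in\mathcal{M}^{\text{good}}:\pi_i(b_i(m))\ne a_i(m)\}$. *)

theory Defs
  imports Complex_Main
begin

(* Signals in [2^(n c)] are represented as naturals in {0..<2^(n c)}
   (i.e. bit strings of length n c); XOR is bitwise xor on nat. *)

datatype 'v gnode = Src | Snk | ANode nat | BNode nat | NNode 'v
datatype 'e gedge = EdA nat | EdX nat | EdY nat | EdZ nat | EdZ' nat | EdB nat | NEdge 'e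

fun gtail :: "('e \<Rightarrow> 'v) \<Rightarrow> (nat \<Rightarrow> 'v) \<Rightarrow> 'e gedge \<Rightarrow> 'v gnode" where
  "gtail tailN tN (EdA i) = Src"
| "gtail tailN tN (EdX i) = ANode i"
| "gtail tailN tN (EdY i) = ANode i"
| "gtail tailN tN (EdZ i) = ANode i"
| "gtail tailN tN (EdZ' i) = NNode (tN i)"
| "gtail tailN tN (EdB i) = BNode i"
| "gtail tailN tN (NEdge e) = NNode (tailN e)"

fun ghead :: "('e \<Rightarrow> 'v) \<Rightarrow> (nat \<Rightarrow> 'v) \<Rightarrow> 'e gedge \<Rightarrow> 'v gnode" where
  "ghead headN sN (EdA i) = ANode i"
| "ghead headN sN (EdX i) = BNode i"
| "ghead headN sN (EdY i) = BNode i"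
| "ghead headN sN (EdZ i) = NNode (sN i)"
| "ghead headN sN (EdZ' i) = BNode i"
| "ghead headN sN (EdB i) = Snk"
| "ghead headN sN (NEdge e) = NNode (headN e)"

definition gedges :: "nat \<Rightarrow> 'e set \<Rightarrow> 'e gedge set" where
  "gedges k EN = (\<Union>i\<in>{1..k}. {EdA i, EdX i, EdY i, EdZ i, EdZ' i, EdB i}) \<union> NEdge ` EN"

fun gcap :: "('e \<Rightarrow> nat) \<Rightarrow> 'e gedge \<Rightarrow> nat" where
  "gcap capN (NEdge e) = capN e"
| "gcap capN _ = 1"

definition acyclicN :: "('e \<Rightarrow> 'v) \<Rightarrow> ('e \<Rightarrow> 'v) \<Rightarrow> 'e set \<Rightarrow> bool" where
  "acyclicN tailN headN EN = acyclic {(tailN e, headN e) | e. e \<in> EN}"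

definition is_code ::
  "('e \<Rightarrow> 'v) \<Rightarrow> ('e \<Rightarrow> 'v) \<Rightarrow> 'e set \<Rightarrow> ('e \<Rightarrow> nat) \<Rightarrow> (nat \<Rightarrow> 'v) \<Rightarrow> (nat \<Rightarrow> 'v)
   \<Rightarrow> nat \<Rightarrow> nat \<Rightarrow> ('e gedge \<Rightarrow> ('e gedge \<Rightarrow> nat) \<Rightarrow> nat \<Rightarrow> nat) \<Rightarrow> bool" where
  "is_code tailN headN EN capN sN tN k n enc \<longleftrightarrow>
     (\<forall>e\<in>gedges k EN. \<forall>\<sigma> m. enc e \<sigma> m < 2 ^ (n * gcap capN e)) \<and>
     (\<forall>e\<in>gedges k EN. \<forall>\<sigma> \<sigma>' m m'.
        (\<forall>e'\<in>gedges k EN. ghead headN sN e' = gtail tailN tN e \<longrightarrow> \<sigma> e' = \<sigma>' e') \<longrightarrow>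
        (gtail tailN tN e = Src \<longrightarrow> m = m') \<longrightarrow>
        enc e \<sigma> m = enc e \<sigma>' m')"

text \<open>Since G is acyclic and every
  path has at most |E| edges, |E| rounds of synchronous evaluation give the
  (unique) consistent signal assignment.\<close>
definition gsig :: "'e gedge set \<Rightarrow> ('e gedge \<Rightarrow> ('e gedge \<Rightarrow> nat) \<Rightarrow> nat \<Rightarrow> nat)
    \<Rightarrow> nat \<Rightarrow> ('e gedge \<Rightarrow> nat) \<Rightarrow> 'e gedge \<Rightarrow> nat" where
  "gsig E enc m r =
     ((\<lambda>\<sigma> e. if e \<in> E then xor (enc e \<sigma> m) (r e) else 0) ^^ card E) (\<lambda>_. 0)"

definition admissible :: "nat \<Rightarrow> 'e set \<Rightarrow> ('e \<Rightarrow> nat) \<Rightarrow> nat \<Rightarrow> ('e gedge \<Rightarrow> nat) \<Rightarrow> bool" where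
  "admissible k EN capN n r \<longleftrightarrow>
     (\<exists>e0. \<forall>e. e \<noteq> e0 \<longrightarrow> r e = 0) \<and>
     (\<forall>e. e \<notin> gedges k EN \<longrightarrow> r e = 0) \<and>
     (\<forall>i. r (EdA i) = 0 \<and> r (EdB i) = 0) \<and>
     (\<forall>e. r e < 2 ^ (n * gcap capN e))"

definition decoded :: "nat \<Rightarrow> 'e set \<Rightarrow> ('e gedge \<Rightarrow> ('e gedge \<Rightarrow> nat) \<Rightarrow> nat \<Rightarrow> nat)
    \<Rightarrow> ((nat \<Rightarrow> nat) \<Rightarrow> nat) \<Rightarrow> nat \<Rightarrow> ('e gedge \<Rightarrow> nat) \<Rightarrow> nat" where
  "decoded k EN enc dec m r =
     dec (\<lambda>j. if j \<in> {1..k} then gsig (gedges k EN) enc m r (EdB j) else 0)"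

definition good_msgs :: "nat \<Rightarrow> nat \<Rightarrow> 'e set \<Rightarrow> ('e \<Rightarrow> nat)
    \<Rightarrow> ('e gedge \<Rightarrow> ('e gedge \<Rightarrow> nat) \<Rightarrow> nat \<Rightarrow> nat) \<Rightarrow> ((nat \<Rightarrow> nat) \<Rightarrow> nat) \<Rightarrow> nat set" where
  "good_msgs k n EN capN enc dec =
     {m. m < 2 ^ (k * n) \<and>
         (\<forall>r. admissible k EN capN n r \<longrightarrow> decoded k EN enc dec m r = m)}"

end

theory Submission
  imports Defs "HOL-Library.FuncSet"
begin

text \<open>Call a good message robust if no admissible error changes what t receives;
  since t decodes correctly, the received tuples of all good messages together with one
  erroneous tuple per non-robust good message are pairwise distinct, so at most
  \<open>2^(kn) - |Good| \<le> \<epsilon> 2^(kn)\<close> good messages are not robust. For a robust message m the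
  gadget of index i forces b_i to depend on a_i alone, and an error on z_i followed by one on
  z'_i shows that m cannot share its a-values off i and b_i with another good message of
  different a_i. Hence robust messages m with \<open>\<pi>(b_i(m)) \<noteq> a_i(m)\<close> are either ambiguous,
  which again costs a tuple outside the a-tuples of good messages, or are outnumbered by
  non-robust messages with \<open>\<pi>(b_i) = a_i\<close> by the choice of \<pi>. Altogether
  \<open>|M^\<pi>_i| \<le> 2\<epsilon> 2^(kn)\<close>.\<close>

lemma funpow_stable_if_acyclic:
  fixes F :: "('a \<Rightarrow> 'b) \<Rightarrow> 'a \<Rightarrow> 'b"
  assumes fin: "finite E" and acyc: "acyclic P" and PE: "P \<subseteq> E \<times> E"
    and local: "\<And>\<sigma> \<sigma>' x. (\<And>y. (y, x) \<in> P \<Longrightarrow> \<sigma> y = \<sigma>' y) \<Longrightarrow> F \<sigma> x = F \<sigma>' x"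
    and "x \<in> E"
  shows "(F ^^ Suc (card E)) \<sigma> x = (F ^^ card E) \<sigma> x"
proof -
  define anc where "anc x = {y. (y, x) \<in> P\<^sup>+}" for x
  have anc_E: "anc x \<subseteq> E" for x
    using trancl_subset_Sigma[OF PE] by (auto simp: anc_def)
  have not_anc: "x \<notin> anc x" for x
    using acyc by (auto simp: anc_def acyclic_def)
  have "wf P"
    using finite_acyclic_wf[OF finite_subset[OF PE] acyc] fin by blast
  \<comment> \<open>The value at x is settled one step after the values at all its ancestors.\<close>
  have "\<forall>j > card (anc x). (F ^^ Suc j) \<sigma> x = (F ^^ j) \<sigma> x" for x
  proof (induction x rule: wf_induct[OF \<open>wf P\<close>])
    case (1 x)
    show ?case
    proof (intro allI impI)
      fix j assume "card (anc x) < j"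
      then obtain j' where j: "j = Suc j'" and j': "card (anc x) \<le> j'"
        by (cases j) auto
      have "(F ^^ Suc j') \<sigma> y = (F ^^ j') \<sigma> y" if "(y, x) \<in> P" for y
      proof -
        have "anc y \<subset> anc x"
          using that not_anc[of y] by (auto simp: anc_def intro: trancl_into_trancl)
        hence "card (anc y) < card (anc x)"
          by (rule psubset_card_mono[OF finite_subset[OF anc_E fin]])
        thus ?thesis using 1 that j' by simp
      qed
      thus "(F ^^ Suc j) \<sigma> x = (F ^^ j) \<sigma> x"
        unfolding j funpow.simps comp_def by (rule local)
    qed
  qed
  moreover have "card (anc x) < card E"
    using \<open>x \<in> E\<close> anc_E not_anc by (intro psubset_card_mono[OF fin]) blast
  ultimately show ?thesis by blast
qed

lemma card_add_le_of_disjoint_images: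
  assumes "finite T" and "inj_on f A" "inj_on g B" and "f ` A \<subseteq> T" "g ` B \<subseteq> T"
    and "f ` A \<inter> g ` B = {}"
  shows "card A + card B \<le> card T"
proof -
  have "card A + card B = card (f ` A \<union> g ` B)"
    using assms by (simp add: card_Un_disjoint card_image finite_subset)
  also have "\<dots> \<le> card T"
    using assms by (intro card_mono) auto
  finally show ?thesis .
qed

text \<open>Fibre by fibre of b: the elements of U in a fibre all share one value of a, so by the
  plurality choice \<pi> they are outnumbered by the elements with a = \<pi> b, which avoid R.\<close>
lemma card_le_card_plurality:
  fixes a b :: "'m \<Rightarrow> 'x"
  assumes "finite G" "U \<subseteq> G" "U \<subseteq> R"
    and miss: "\<And>m. m \<in> U \<Longrightarrow> \<pi> (b m) \<noteq> a m"
    and determined: "\<And>m m'. m \<in> U \<Longrightarrow> m' \<in> R \<Longrightarrow> b m' = b m \<Longrightarrow> a m' = a m"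
    and plurality: "\<And>m. m \<in> U \<Longrightarrow>
      card {x \<in> G. a x = a m \<and> b x = b m} \<le> card {x \<in> G. a x = \<pi> (b m) \<and> b x = b m}"
  shows "card U \<le> card {m \<in> G - R. \<pi> (b m) = a m}"
proof -
  define L where "L c = {x \<in> G. a x = \<pi> c \<and> b x = c}" for c
  have fin: "finite U" using assms(1,2) finite_subset by blast
  have "card U = card (\<Union>c\<in>b ` U. {m \<in> U. b m = c})"
    by (rule arg_cong[where f = card]) auto
  also have "\<dots> = (\<Sum>c\<in>b ` U. card {m \<in> U. b m = c})"
    using fin by (intro card_UN_disjoint) auto
  also have "\<dots> \<le> (\<Sum>c\<in>b ` U. card (L c))"
  proof (rule sum_mono)
    fix c assume "c \<in> b ` U"
    then obtain m where m: "m \<in> U" "b m = c" by blast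
    have "{m' \<in> U. b m' = c} \<subseteq> {x \<in> G. a x = a m \<and> b x = b m}"
      using m assms(2,3) determined by auto
    hence "card {m' \<in> U. b m' = c} \<le> card {x \<in> G. a x = a m \<and> b x = b m}"
      using assms(1) by (intro card_mono) auto
    also have "\<dots> \<le> card (L c)"
      using plurality[OF m(1)] m(2) by (simp add: L_def)
    finally show "card {m' \<in> U. b m' = c} \<le> card (L c)" .
  qed
  also have "\<dots> = card (\<Union>c\<in>b ` U. L c)"
    using fin assms(1) by (intro card_UN_disjoint[symmetric]) (auto simp: L_def)
  also have "\<dots> \<le> card {m \<in> G - R. \<pi> (b m) = a m}"
  proof (rule card_mono)
    show "finite {m \<in> G - R. \<pi> (b m) = a m}" using assms(1) by simp
    show "(\<Union>c\<in>b ` U. L c) \<subseteq> {m \<in> G - R. \<pi> (b m) = a m}"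
    proof clarify
      fix m x assume "m \<in> U" "x \<in> L (b m)"
      thus "x \<in> G - R \<and> \<pi> (b x) = a x"
        using miss determined by (fastforce simp: L_def)
    qed
  qed
  finally show ?thesis .
qed

lemma xor_less_two_power: "(x::nat) < 2 ^ n \<Longrightarrow> y < 2 ^ n \<Longrightarrow> xor x y < 2 ^ n"
  by (metis take_bit_nat_eq_self_iff take_bit_xor)

definition tuple_space :: "nat \<Rightarrow> nat \<Rightarrow> (nat \<Rightarrow> nat) set" where
  "tuple_space k n = {f. (\<forall>j\<in>{1..k}. f j < 2 ^ n) \<and> (\<forall>j. j \<notin> {1..k} \<longrightarrow> f j = 0)}"

lemma finite_tuple_space: "finite (tuple_space k n)"
  and card_tuple_space_le: "card (tuple_space k n) \<le> 2 ^ (k * n)"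
proof -
  let ?P = "PiE {1..k} (\<lambda>_. {..<(2::nat) ^ n})"
  have inj: "inj_on (\<lambda>f. restrict f {1..k}) (tuple_space k n)"
  proof (rule inj_onI, rule ext)
    fix f g :: "nat \<Rightarrow> nat" and j
    assume fg: "f \<in> tuple_space k n" "g \<in> tuple_space k n"
      and eq: "restrict f {1..k} = restrict g {1..k}"
    show "f j = g j"
    proof (cases "j \<in> {1..k}")
      case True thus ?thesis using fun_cong[OF eq, of j] by simp
    qed (use fg in \<open>auto simp: tuple_space_def\<close>)
  qed
  have sub: "(\<lambda>f. restrict f {1..k}) ` tuple_space k n \<subseteq> ?P"
    by (auto simp: tuple_space_def)
  have "finite ?P" by (simp add: finite_PiE)
  moreover have "card ?P = 2 ^ (k * n)"
    by (simp add: card_PiE power_mult[symmetric] mult.commute)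
  ultimately show "finite (tuple_space k n)" "card (tuple_space k n) \<le> 2 ^ (k * n)"
    using inj_on_finite[OF inj sub] card_inj_on_le[OF inj sub] by simp_all
qed

locale network_code =
  fixes tailN headN :: "'e \<Rightarrow> 'v" and EN :: "'e set" and capN :: "'e \<Rightarrow> nat"
    and sN tN :: "nat \<Rightarrow> 'v" and k n :: nat
    and enc :: "'e gedge \<Rightarrow> ('e gedge \<Rightarrow> nat) \<Rightarrow> nat \<Rightarrow> nat"
  assumes finite_EN: "finite EN"
    and acyclic_N: "acyclicN tailN headN EN"
    and code: "is_code tailN headN EN capN sN tN k n enc"
begin

abbreviation "E \<equiv> gedges k EN"
abbreviation "head \<equiv> ghead headN sN"
abbreviation "tail \<equiv> gtail tailN tN"
abbreviation "sig \<equiv> gsig E enc"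
abbreviation "adm \<equiv> admissible k EN capN n"

lemma mem_edges [simp]:
  "EdA j \<in> E \<longleftrightarrow> j \<in> {1..k}" "EdX j \<in> E \<longleftrightarrow> j \<in> {1..k}" "EdY j \<in> E \<longleftrightarrow> j \<in> {1..k}"
  "EdZ j \<in> E \<longleftrightarrow> j \<in> {1..k}" "EdZ' j \<in> E \<longleftrightarrow> j \<in> {1..k}" "EdB j \<in> E \<longleftrightarrow> j \<in> {1..k}"
  "NEdge x \<in> E \<longleftrightarrow> x \<in> EN"
  by (auto simp: gedges_def)

lemma finite_edges: "finite E"
  using finite_EN by (auto simp: gedges_def)

lemma enc_local:
  assumes "e \<in> E" and "\<And>e'. e' \<in> E \<Longrightarrow> head e' = tail e \<Longrightarrow> \<sigma> e' = \<sigma>' e'"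
    and "tail e = Src \<Longrightarrow> m = m'"
  shows "enc e \<sigma> m = enc e \<sigma>' m'"
  using code assms unfolding is_code_def by blast

lemma enc_less: "e \<in> E \<Longrightarrow> enc e \<sigma> m < 2 ^ (n * gcap capN e)"
  using code unfolding is_code_def by blast

definition feeds :: "('e gedge \<times> 'e gedge) set" where
  "feeds = {(e', e). e' \<in> E \<and> e \<in> E \<and> head e' = tail e}"

fun node_level :: "'v gnode \<Rightarrow> nat" where
  "node_level Src = 0" | "node_level (ANode _) = 1" | "node_level (NNode _) = 2"
| "node_level (BNode _) = 3" | "node_level Snk = 4"

definition node_before :: "'v gnode \<Rightarrow> 'v gnode \<Rightarrow> bool" where
  "node_before x y \<longleftrightarrow> node_level x < node_level y \<or>
     (\<exists>u v. x = NNode u \<and> y = NNode v \<and> (u, v) \<in> {(tailN e, headN e) | e. e \<in> EN}\<^sup>+)"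

lemma node_before_trans: "node_before x y \<Longrightarrow> node_before y z \<Longrightarrow> node_before x z"
  unfolding node_before_def by (auto intro: trancl_trans)

lemma tail_before_head: "e \<in> E \<Longrightarrow> node_before (tail e) (head e)"
  unfolding node_before_def by (cases e) auto

lemma feeds_before: "(e', e) \<in> feeds \<Longrightarrow> node_before (tail e') (tail e)"
  unfolding feeds_def using tail_before_head[of e'] by auto

lemma feeds_trancl_before: "(e', e) \<in> feeds\<^sup>+ \<Longrightarrow> node_before (tail e') (tail e)"
  by (induction rule: trancl_induct) (auto dest: feeds_before intro: node_before_trans)

lemma acyclic_feeds: "acyclic feeds"
proof (rule acyclicI, intro allI notI)
  fix e assume "(e, e) \<in> feeds\<^sup>+"
  hence "node_before (tail e) (tail e)" by (rule feeds_trancl_before)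
  with acyclic_N show False
    unfolding node_before_def acyclicN_def acyclic_def by auto
qed

definition sig_step :: "nat \<Rightarrow> ('e gedge \<Rightarrow> nat) \<Rightarrow> ('e gedge \<Rightarrow> nat) \<Rightarrow> 'e gedge \<Rightarrow> nat" where
  "sig_step m r \<sigma> e = (if e \<in> E then xor (enc e \<sigma> m) (r e) else 0)"

lemma sig_fixpoint: "sig m r e = (if e \<in> E then xor (enc e (sig m r) m) (r e) else 0)"
proof -
  have sig_eq: "sig m r = (sig_step m r ^^ card E) (\<lambda>_. 0)"
    unfolding gsig_def sig_step_def[abs_def] ..
  have "sig m r e = (sig_step m r ^^ Suc (card E)) (\<lambda>_. 0) e"
  proof (cases "e \<in> E")
    case True
    show ?thesis
      unfolding sig_eq
    proof (rule funpow_stable_if_acyclic[OF finite_edges acyclic_feeds, symmetric])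
      show "feeds \<subseteq> E \<times> E" by (auto simp: feeds_def)
      show "sig_step m r \<sigma> x = sig_step m r \<sigma>' x"
        if "\<And>y. (y, x) \<in> feeds \<Longrightarrow> \<sigma> y = \<sigma>' y" for \<sigma> \<sigma>' x
        using that by (auto simp: sig_step_def feeds_def intro: arg_cong2[where f = xor] enc_local)
    qed (rule True)
  next
    case False
    thus ?thesis by (cases "card E") (simp_all add: sig_eq sig_step_def)
  qed
  thus ?thesis by (simp add: sig_eq sig_step_def)
qed

lemma sig_inside: "e \<in> E \<Longrightarrow> sig m r e = xor (enc e (sig m r) m) (r e)"
  using sig_fixpoint by simp

lemma sig_outside: "e \<notin> E \<Longrightarrow> sig m r e = 0"
  using sig_fixpoint by simp

lemma sig_less:
  "e \<in> E \<Longrightarrow> r e < 2 ^ (n * gcap capN e) \<Longrightarrow> sig m r e < 2 ^ (n * gcap capN e)"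
  using sig_fixpoint[of m r e] enc_less[of e] xor_less_two_power by simp

lemma sig_agree_on:
  assumes "S \<subseteq> E"
    and "\<And>e. e \<in> S \<Longrightarrow> tail e = Src \<Longrightarrow> m1 = m2"
    and "\<And>e. e \<in> S \<Longrightarrow> r1 e = r2 e"
    and "\<And>e e'. e \<in> S \<Longrightarrow> e' \<in> E - S \<Longrightarrow> head e' = tail e \<Longrightarrow> sig m1 r1 e' = sig m2 r2 e'"
    and "e \<in> S"
  shows "sig m1 r1 e = sig m2 r2 e"
  using \<open>e \<in> S\<close>
proof (induction e rule: wf_induct[OF finite_acyclic_wf[OF _ acyclic_feeds]])
  show "finite feeds"
    by (rule finite_subset[of _ "E \<times> E"]) (auto simp: feeds_def finite_edges)
next
  case (2 e)
  have "e \<in> E" using 2 assms(1) by auto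
  have "enc e (sig m1 r1) m1 = enc e (sig m2 r2) m2"
    using \<open>e \<in> E\<close> 2 assms(2,4) by (intro enc_local) (auto simp: feeds_def)
  thus ?case
    using sig_fixpoint[of m1 r1 e] sig_fixpoint[of m2 r2 e] \<open>e \<in> E\<close> assms(3)[OF 2(2)] by simp
qed

lemma head_ne_Src [simp]: "head e \<noteq> Src"
  by (cases e) auto

lemma head_eq_ANode [simp]: "head e = ANode j \<longleftrightarrow> e = EdA j"
  by (cases e) auto

lemma head_eq_BNode [simp]: "head e = BNode j \<longleftrightarrow> e = EdX j \<or> e = EdY j \<or> e = EdZ' j"
  by (cases e) auto

lemma sig_a_error_free:
  assumes "r (EdA j) = 0"
  shows "sig m r (EdA j) = sig m (\<lambda>_. 0) (EdA j)"
proof (cases "j \<in> {1..k}")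
  case True
  have "enc (EdA j) (sig m r) m = enc (EdA j) (sig m (\<lambda>_. 0)) m"
    using True by (intro enc_local) auto
  thus ?thesis using True assms by (simp add: sig_inside)
next
  case False
  thus ?thesis by (simp add: sig_outside)
qed

definition from_a :: "nat \<Rightarrow> nat \<Rightarrow> 'e gedge \<Rightarrow> nat" where
  "from_a j \<alpha> = (\<lambda>e. if e = EdA j then \<alpha> else 0)"

text \<open>The signal on b_j when a_j carries \<alpha>, x_j and y_j are error-free and z'_j carries w;
  the message argument 0 is irrelevant because none of these edges leaves s.\<close>
definition b_out :: "nat \<Rightarrow> nat \<Rightarrow> nat \<Rightarrow> nat" where
  "b_out j \<alpha> w = enc (EdB j)
     (\<lambda>e. if e = EdX j then enc (EdX j) (from_a j \<alpha>) 0
          else if e = EdY j then enc (EdY j) (from_a j \<alpha>) 0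
          else if e = EdZ' j then w else 0) 0"

lemma sig_from_a:
  assumes "j \<in> {1..k}" and "e = EdX j \<or> e = EdY j \<or> e = EdZ j"
  shows "sig m r e = xor (enc e (from_a j (sig m r (EdA j))) 0) (r e)"
proof -
  have "enc e (sig m r) m = enc e (from_a j (sig m r (EdA j))) 0"
    using assms by (intro enc_local) (auto simp: from_a_def)
  thus ?thesis using assms by (auto simp: sig_inside)
qed

lemma sig_b:
  assumes "j \<in> {1..k}" and "r (EdX j) = 0" "r (EdY j) = 0" "r (EdB j) = 0"
  shows "sig m r (EdB j) = b_out j (sig m r (EdA j)) (sig m r (EdZ' j))"
proof -
  have "enc (EdB j) (sig m r) m = b_out j (sig m r (EdA j)) (sig m r (EdZ' j))"
    unfolding b_out_def using assms sig_from_a[OF assms(1)] by (intro enc_local) auto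
  thus ?thesis using assms by (simp add: sig_inside)
qed

lemma sig_single_error:
  assumes "e \<in> E" and "\<And>e'. e' \<in> E \<Longrightarrow> head e' = tail e \<Longrightarrow> sig m r e' = sig m (\<lambda>_. 0) e'"
  shows "sig m r e = xor (sig m (\<lambda>_. 0) e) (r e)"
proof -
  have "enc e (sig m r) m = enc e (sig m (\<lambda>_. 0)) m"
    using assms by (intro enc_local) auto
  thus ?thesis using assms(1) by (simp add: sig_inside)
qed

definition inner_edges :: "'e gedge set" where
  "inner_edges = {e \<in> E. \<forall>j. e \<notin> {EdA j, EdX j, EdY j, EdB j}}"

lemma entering_inner:
  assumes "e \<in> inner_edges" "e' \<in> E - inner_edges" "head e' = tail e"
  shows "\<exists>j. e' = EdA j \<and> e = EdZ j"
  using assms by (cases e; cases e') (auto simp: inner_edges_def)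

lemma sig_agree_inner:
  assumes "S \<subseteq> inner_edges"
    and "\<And>e. e \<in> S \<Longrightarrow> r1 e = r2 e"
    and "\<And>j. EdZ j \<in> S \<Longrightarrow> sig m1 r1 (EdA j) = sig m2 r2 (EdA j)"
    and "\<And>e e'. e \<in> S \<Longrightarrow> e' \<in> inner_edges - S \<Longrightarrow> head e' = tail e \<Longrightarrow> sig m1 r1 e' = sig m2 r2 e'"
    and "e \<in> S"
  shows "sig m1 r1 e = sig m2 r2 e"
proof (rule sig_agree_on[OF _ _ assms(2) _ assms(5)])
  show "S \<subseteq> E" using assms(1) by (auto simp: inner_edges_def)
  show "m1 = m2" if "e \<in> S" "tail e = Src" for e
    using that assms(1) by (cases e) (auto simp: inner_edges_def)
  show "sig m1 r1 e' = sig m2 r2 e'" if e: "e \<in> S" "e' \<in> E - S" "head e' = tail e" for e e'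
  proof (cases "e' \<in> inner_edges")
    case True thus ?thesis using e assms(4) by blast
  next
    case False
    then obtain j where "e' = EdA j" "e = EdZ j"
      using entering_inner[of e e'] e assms(1) by blast
    thus ?thesis using e assms(3) by blast
  qed
qed

lemma tail_inner: "e \<in> inner_edges \<Longrightarrow> tail e \<noteq> BNode j"
  by (cases e) (auto simp: inner_edges_def)

definition atuple :: "nat \<Rightarrow> nat \<Rightarrow> nat" where
  "atuple m = (\<lambda>j. if j \<in> {1..k} then sig m (\<lambda>_. 0) (EdA j) else 0)"

definition btuple :: "nat \<Rightarrow> ('e gedge \<Rightarrow> nat) \<Rightarrow> nat \<Rightarrow> nat" where
  "btuple m r = (\<lambda>j. if j \<in> {1..k} then sig m r (EdB j) else 0)"

lemma sig_less_two_power: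
  "e \<in> E \<Longrightarrow> gcap capN e = 1 \<Longrightarrow> r e < 2 ^ n \<Longrightarrow> sig m r e < 2 ^ n"
  using sig_less[of e r m] by simp

lemma atuple_in_tuple_space: "atuple m \<in> tuple_space k n"
  by (auto simp: atuple_def tuple_space_def intro: sig_less_two_power)

lemma btuple_in_tuple_space: "adm r \<Longrightarrow> btuple m r \<in> tuple_space k n"
  unfolding admissible_def by (auto simp: btuple_def tuple_space_def intro: sig_less_two_power)

lemma admissible_single_error:
  assumes "e \<in> inner_edges - range NEdge" and "v < 2 ^ n"
  shows "adm ((\<lambda>_. 0)(e := v))"
  using assms by (cases e) (auto simp: admissible_def inner_edges_def)

lemma btuple_eq_if_atuple_eq:
  assumes "atuple m = atuple m'"
  shows "btuple m (\<lambda>_. 0) = btuple m' (\<lambda>_. 0)"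
proof -
  have inner: "sig m (\<lambda>_. 0) e = sig m' (\<lambda>_. 0) e" if "e \<in> inner_edges" for e
  proof (rule sig_agree_inner[OF subset_refl _ _ _ that])
    show "sig m (\<lambda>_. 0) (EdA j) = sig m' (\<lambda>_. 0) (EdA j)" if "EdZ j \<in> inner_edges" for j
      using that fun_cong[OF assms, of j] by (simp add: atuple_def inner_edges_def)
  qed auto
  show ?thesis
  proof (rule ext)
    fix j
    show "btuple m (\<lambda>_. 0) j = btuple m' (\<lambda>_. 0) j"
    proof (cases "j \<in> {1..k}")
      case True
      have "sig m (\<lambda>_. 0) (EdA j) = sig m' (\<lambda>_. 0) (EdA j)"
        using fun_cong[OF assms, of j] True by (simp add: atuple_def)
      moreover have "sig m (\<lambda>_. 0) (EdZ' j) = sig m' (\<lambda>_. 0) (EdZ' j)"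
        using inner True by (simp add: inner_edges_def)
      ultimately show ?thesis using True by (simp add: btuple_def sig_b)
    qed (auto simp: btuple_def)
  qed
qed

lemma btuple_z'_error:
  assumes i: "i \<in> {1..k}" and w: "w < 2 ^ n"
  shows "\<exists>r. adm r \<and> btuple m r = (btuple m (\<lambda>_. 0))(i := b_out i (sig m (\<lambda>_. 0) (EdA i)) w)"
proof -
  define r :: "'e gedge \<Rightarrow> nat" where "r = (\<lambda>_. 0)(EdZ' i := xor (sig m (\<lambda>_. 0) (EdZ' i)) w)"
  have "adm r"
    unfolding r_def using i w
    by (intro admissible_single_error xor_less_two_power sig_less_two_power) (auto simp: inner_edges_def)
  have inner: "sig m r e = sig m (\<lambda>_. 0) e" if "e \<in> inner_edges - {EdZ' i}" for e
  proof (rule sig_agree_inner[OF _ _ _ _ that])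
    show "head e' = tail e \<Longrightarrow> sig m r e' = sig m (\<lambda>_. 0) e'"
      if "e \<in> inner_edges - {EdZ' i}" "e' \<in> inner_edges - (inner_edges - {EdZ' i})" for e e'
      using that tail_inner[of e i] by auto
    show "sig m r (EdA j) = sig m (\<lambda>_. 0) (EdA j)" for j
      by (rule sig_a_error_free) (simp add: r_def)
  qed (simp_all add: r_def)
  have "sig m r (EdZ' i) = xor (sig m (\<lambda>_. 0) (EdZ' i)) (r (EdZ' i))"
  proof (rule sig_single_error)
    show "sig m r e' = sig m (\<lambda>_. 0) e'" if "e' \<in> E" "head e' = tail (EdZ' i)" for e'
      using that by (intro inner) (cases e'; auto simp: inner_edges_def)
  qed (use i in simp)
  hence z': "sig m r (EdZ' i) = w"
    by (simp add: r_def flip: xor.assoc)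
  have "btuple m r = (btuple m (\<lambda>_. 0))(i := b_out i (sig m (\<lambda>_. 0) (EdA i)) w)"
  proof (rule ext)
    fix j
    show "btuple m r j = ((btuple m (\<lambda>_. 0))(i := b_out i (sig m (\<lambda>_. 0) (EdA i)) w)) j"
    proof (cases "j \<in> {1..k}")
      case True
      have "sig m r (EdA j) = sig m (\<lambda>_. 0) (EdA j)"
        by (rule sig_a_error_free) (simp add: r_def)
      moreover have "j \<noteq> i \<Longrightarrow> sig m r (EdZ' j) = sig m (\<lambda>_. 0) (EdZ' j)"
        using True by (intro inner) (simp add: inner_edges_def)
      ultimately show ?thesis
        using True z' by (simp add: btuple_def sig_b r_def)
    qed (use i in \<open>auto simp: btuple_def\<close>)
  qed
  with \<open>adm r\<close> show ?thesis by blast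
qed

text \<open>The error on z_i makes s_i receive what it receives under m'; as the other a_j agree,
  all of N then carries the signals of m'.\<close>
lemma btuple_z_error:
  assumes i: "i \<in> {1..k}" and same_a: "\<And>j. j \<noteq> i \<Longrightarrow> atuple m j = atuple m' j"
  shows "\<exists>r. adm r \<and> btuple m r =
    (btuple m' (\<lambda>_. 0))(i := b_out i (sig m (\<lambda>_. 0) (EdA i)) (sig m' (\<lambda>_. 0) (EdZ' i)))"
proof -
  define r :: "'e gedge \<Rightarrow> nat"
    where "r = (\<lambda>_. 0)(EdZ i := xor (sig m (\<lambda>_. 0) (EdZ i)) (sig m' (\<lambda>_. 0) (EdZ i)))"
  have "adm r"
    unfolding r_def using i
    by (intro admissible_single_error xor_less_two_power sig_less_two_power) (auto simp: inner_edges_def)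
  have a: "sig m r (EdA j) = sig m (\<lambda>_. 0) (EdA j)" for j
    by (rule sig_a_error_free) (simp add: r_def)
  have "sig m r (EdZ i) = xor (sig m (\<lambda>_. 0) (EdZ i)) (r (EdZ i))"
    using i a by (intro sig_single_error) auto
  hence z: "sig m r (EdZ i) = sig m' (\<lambda>_. 0) (EdZ i)"
    by (simp add: r_def flip: xor.assoc)
  have inner: "sig m r e = sig m' (\<lambda>_. 0) e" if "e \<in> inner_edges - {EdZ i}" for e
  proof (rule sig_agree_inner[OF _ _ _ _ that])
    show "sig m r (EdA j) = sig m' (\<lambda>_. 0) (EdA j)" if "EdZ j \<in> inner_edges - {EdZ i}" for j
      using that same_a[of j] a[of j] by (simp add: atuple_def inner_edges_def)
    show "sig m r e' = sig m' (\<lambda>_. 0) e'"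
      if "e' \<in> inner_edges - (inner_edges - {EdZ i})" for e'
      using that z by auto
  qed (simp_all add: r_def)
  have "btuple m r =
    (btuple m' (\<lambda>_. 0))(i := b_out i (sig m (\<lambda>_. 0) (EdA i)) (sig m' (\<lambda>_. 0) (EdZ' i)))"
  proof (rule ext)
    fix j
    show "btuple m r j = ((btuple m' (\<lambda>_. 0))
      (i := b_out i (sig m (\<lambda>_. 0) (EdA i)) (sig m' (\<lambda>_. 0) (EdZ' i)))) j"
    proof (cases "j \<in> {1..k}")
      case True
      have "sig m r (EdZ' j) = sig m' (\<lambda>_. 0) (EdZ' j)"
        using True by (intro inner) (simp add: inner_edges_def)
      moreover have "j \<noteq> i \<Longrightarrow> sig m r (EdA j) = sig m' (\<lambda>_. 0) (EdA j)"
        using True same_a[of j] a[of j] by (simp add: atuple_def)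
      ultimately show ?thesis
        using True a[of i] by (simp add: btuple_def sig_b r_def)
    qed (use i in \<open>auto simp: btuple_def\<close>)
  qed
  with \<open>adm r\<close> show ?thesis by blast
qed

end

locale decoding_network = network_code +
  fixes dec :: "(nat \<Rightarrow> nat) \<Rightarrow> nat" and i :: nat
  assumes i: "i \<in> {1..k}"
begin

abbreviation "good \<equiv> good_msgs k n EN capN enc dec"
abbreviation "a m \<equiv> sig m (\<lambda>_. 0) (EdA i)"
abbreviation "b m \<equiv> sig m (\<lambda>_. 0) (EdB i)"
abbreviation "z' m \<equiv> sig m (\<lambda>_. 0) (EdZ' i)"

lemma finite_good: "finite good"
  by (rule finite_subset[of _ "{..<2 ^ (k * n)}"]) (auto simp: good_msgs_def)

lemma good_decodes: "m \<in> good \<Longrightarrow> adm r \<Longrightarrow> dec (btuple m r) = m"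
  by (simp add: good_msgs_def decoded_def btuple_def)

lemma good_eq_if_btuple_eq:
  "m \<in> good \<Longrightarrow> m' \<in> good \<Longrightarrow> adm r \<Longrightarrow> adm r' \<Longrightarrow> btuple m r = btuple m' r' \<Longrightarrow> m = m'"
  using good_decodes by metis

lemma adm_no_error: "adm (\<lambda>_. 0)"
  by (simp add: admissible_def)

lemma a_less: "a m < 2 ^ n" and z'_less: "z' m < 2 ^ n"
  using i by (auto intro: sig_less_two_power)

lemma b_eq_b_out: "b m = b_out i (a m) (z' m)"
  using i by (simp add: sig_b)

definition robust :: "nat set" where
  "robust = {m \<in> good. \<forall>r. adm r \<longrightarrow> btuple m r = btuple m (\<lambda>_. 0)}"

lemma robust_subset_good: "robust \<subseteq> good"
  by (auto simp: robust_def)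

lemma card_good_add_fragile: "card good + card (good - robust) \<le> 2 ^ (k * n)"
proof -
  define err where "err m = (SOME r. adm r \<and> btuple m r \<noteq> btuple m (\<lambda>_. 0))" for m
  have err: "adm (err m)" "btuple m (err m) \<noteq> btuple m (\<lambda>_. 0)" if "m \<in> good - robust" for m
    using someI_ex[of "\<lambda>r. adm r \<and> btuple m r \<noteq> btuple m (\<lambda>_. 0)"] that
    unfolding err_def robust_def by auto
  have "card good + card (good - robust) \<le> card (tuple_space k n)"
  proof (rule card_add_le_of_disjoint_images[OF finite_tuple_space])
    show "inj_on (\<lambda>m. btuple m (\<lambda>_. 0)) good"
      by (rule inj_onI, rule good_eq_if_btuple_eq) (simp_all add: adm_no_error)
    show "inj_on (\<lambda>m. btuple m (err m)) (good - robust)"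
    proof (rule inj_onI)
      fix m m' assume m: "m \<in> good - robust" "m' \<in> good - robust"
        and eq: "btuple m (err m) = btuple m' (err m')"
      show "m = m'"
        using m good_eq_if_btuple_eq[OF _ _ err(1)[OF m(1)] err(1)[OF m(2)] eq] by blast
    qed
    show "(\<lambda>m. btuple m (\<lambda>_. 0)) ` good \<inter> (\<lambda>m. btuple m (err m)) ` (good - robust) = {}"
    proof (intro equals0I, elim IntE imageE)
      fix t m m' assume m: "m \<in> good" "m' \<in> good - robust"
        and "t = btuple m (\<lambda>_. 0)" "t = btuple m' (err m')"
      hence eq: "btuple m (\<lambda>_. 0) = btuple m' (err m')" by simp
      hence "m = m'"
        using m good_eq_if_btuple_eq[OF _ _ adm_no_error err(1)[OF m(2)] eq] by blast
      thus False using err(2)[OF m(2)] eq by simp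
    qed
    show "(\<lambda>m. btuple m (\<lambda>_. 0)) ` good \<subseteq> tuple_space k n"
      using adm_no_error btuple_in_tuple_space by blast
    show "(\<lambda>m. btuple m (err m)) ` (good - robust) \<subseteq> tuple_space k n"
      using err(1) btuple_in_tuple_space by blast
  qed
  thus ?thesis using card_tuple_space_le by (rule le_trans)
qed

lemma robust_b_out:
  assumes "m \<in> robust" and "w < 2 ^ n"
  shows "b_out i (a m) w = b m"
proof -
  obtain r where "adm r" and err: "btuple m r = (btuple m (\<lambda>_. 0))(i := b_out i (a m) w)"
    using btuple_z'_error[OF i \<open>w < 2 ^ n\<close>] by blast
  hence "btuple m (\<lambda>_. 0) = (btuple m (\<lambda>_. 0))(i := b_out i (a m) w)"
    using assms(1) by (simp add: robust_def)
  from fun_cong[OF this, of i] show ?thesis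
    using i by (simp add: btuple_def)
qed

lemma robust_b_eq: "m \<in> robust \<Longrightarrow> m' \<in> robust \<Longrightarrow> a m = a m' \<Longrightarrow> b m = b m'"
  using robust_b_out[of m' "z' m"] b_eq_b_out[of m] z'_less by simp

text \<open>A robust message m cannot be confused with a good message m' agreeing with it off a_i:
  an error on z_i makes m look like m' except on b_i, and an error on z'_i can then make
  m' look exactly like m.\<close>
lemma robust_unconfusable:
  assumes m: "m \<in> robust" and m': "m' \<in> good"
    and same_a: "\<And>j. j \<noteq> i \<Longrightarrow> atuple m j = atuple m' j"
    and "w < 2 ^ n" and b: "b_out i (a m') w = b m"
  shows "m' = m"
proof -
  obtain r where "adm r"
    and m_r: "btuple m r = (btuple m' (\<lambda>_. 0))(i := b_out i (a m) (z' m'))"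
    using btuple_z_error[OF i same_a] by blast
  hence m_r': "btuple m (\<lambda>_. 0) = (btuple m' (\<lambda>_. 0))(i := b_out i (a m) (z' m'))"
    using m by (simp add: robust_def)
  obtain r' where r': "adm r'" and m'_r': "btuple m' r' = (btuple m' (\<lambda>_. 0))(i := b_out i (a m') w)"
    using btuple_z'_error[OF i \<open>w < 2 ^ n\<close>] by blast
  have "btuple m' r' = btuple m (\<lambda>_. 0)"
  proof (rule ext)
    fix j
    show "btuple m' r' j = btuple m (\<lambda>_. 0) j"
    proof (cases "j = i")
      case True thus ?thesis using m'_r' b i by (simp add: btuple_def)
    next
      case False thus ?thesis using m'_r' fun_cong[OF m_r', of j] by simp
    qed
  qed
  moreover have "m \<in> good" using m by (simp add: robust_def)
  ultimately show ?thesis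
    using good_eq_if_btuple_eq[OF m' _ r' adm_no_error] by blast
qed

lemma inj_on_atuple: "inj_on atuple good"
proof (rule inj_onI)
  fix m m' assume "m \<in> good" "m' \<in> good" "atuple m = atuple m'"
  thus "m = m'"
    using btuple_eq_if_atuple_eq good_eq_if_btuple_eq[OF _ _ adm_no_error adm_no_error] by blast
qed

definition ambiguous :: "nat set" where
  "ambiguous = {m \<in> robust. \<exists>m' \<in> robust. b m' = b m \<and> a m' \<noteq> a m}"

text \<open>Replacing a_i in the a-tuple of an ambiguous message by that of its robust partner
  yields a tuple which is the a-tuple of no good message, injectively.\<close>
lemma ambiguous_subset_robust: "ambiguous \<subseteq> robust"
  by (auto simp: ambiguous_def)

lemma card_ambiguous_add_good: "card ambiguous + card good \<le> 2 ^ (k * n)"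
proof -
  define partner where "partner m = (SOME m'. m' \<in> robust \<and> b m' = b m \<and> a m' \<noteq> a m)" for m
  have partner: "partner m \<in> robust" "b (partner m) = b m" "a (partner m) \<noteq> a m"
    if "m \<in> ambiguous" for m
    using someI_ex[of "\<lambda>m'. m' \<in> robust \<and> b m' = b m \<and> a m' \<noteq> a m"] that
    unfolding partner_def ambiguous_def by auto
  define swap where "swap m = (atuple m)(i := a (partner m))" for m
  have "card ambiguous + card good \<le> card (tuple_space k n)"
  proof (rule card_add_le_of_disjoint_images[OF finite_tuple_space _ inj_on_atuple])
    show "inj_on swap ambiguous"
    proof (rule inj_onI)
      fix m1 m2 assume m: "m1 \<in> ambiguous" "m2 \<in> ambiguous" and swap: "swap m1 = swap m2"
      have same_a: "atuple m1 j = atuple m2 j" if "j \<noteq> i" for j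
        using that fun_cong[OF swap, of j] by (simp add: swap_def)
      have "a (partner m1) = a (partner m2)"
        using fun_cong[OF swap, of i] by (simp add: swap_def)
      hence "b (partner m1) = b (partner m2)"
        by (rule robust_b_eq[OF partner(1)[OF m(1)] partner(1)[OF m(2)]])
      hence "b_out i (a m2) (z' m2) = b m1"
        using partner(2) m by (simp add: b_eq_b_out[symmetric])
      moreover have "m1 \<in> robust" "m2 \<in> good"
        using m ambiguous_subset_robust robust_subset_good by auto
      ultimately show "m1 = m2"
        using robust_unconfusable[OF _ _ same_a z'_less] by metis
    qed
    show "swap ` ambiguous \<inter> atuple ` good = {}"
    proof (intro equals0I, elim IntE imageE)
      fix t m m' assume m: "m \<in> ambiguous" and "m' \<in> good" "t = swap m" "t = atuple m'"
      hence swap: "swap m = atuple m'" by simp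
      have "a m' = a (partner m)"
        using fun_cong[OF swap, of i] i by (simp add: swap_def atuple_def)
      hence "b_out i (a m') (z' (partner m)) = b m"
        using partner[OF m] by (simp add: b_eq_b_out[symmetric])
      moreover have "atuple m j = atuple m' j" if "j \<noteq> i" for j
        using that fun_cong[OF swap, of j] by (simp add: swap_def)
      ultimately have "m' = m"
        using robust_unconfusable[OF _ \<open>m' \<in> good\<close> _ z'_less] m ambiguous_subset_robust by blast
      thus False using partner(3)[OF m] \<open>a m' = a (partner m)\<close> by simp
    qed
    show "swap ` ambiguous \<subseteq> tuple_space k n"
      using atuple_in_tuple_space a_less i by (auto simp: swap_def tuple_space_def)
  qed (rule image_subsetI, rule atuple_in_tuple_space)
  thus ?thesis using card_tuple_space_le by (rule le_trans)
qed

lemma card_mismatch_le: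
  fixes \<pi> :: "nat \<Rightarrow> nat"
  assumes plurality: "\<And>ah bh. ah < 2 ^ n \<Longrightarrow> bh < 2 ^ n \<Longrightarrow>
      card {m \<in> good. a m = ah \<and> b m = bh} \<le> card {m \<in> good. a m = \<pi> bh \<and> b m = bh}"
  shows "card {m \<in> good. \<pi> (b m) \<noteq> a m} \<le> card (good - robust) + card ambiguous"
proof -
  define M where "M = {m \<in> good. \<pi> (b m) \<noteq> a m}"
  define fragile where "fragile = good - robust"
  have "card (M \<inter> robust - ambiguous) \<le> card {m \<in> good - robust. \<pi> (b m) = a m}"
  proof (rule card_le_card_plurality[OF finite_good, where a = "\<lambda>m. a m" and b = "\<lambda>m. b m"])
    show "M \<inter> robust - ambiguous \<subseteq> good" "M \<inter> robust - ambiguous \<subseteq> robust"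
      by (auto simp: M_def)
    show "\<pi> (b m) \<noteq> a m" if "m \<in> M \<inter> robust - ambiguous" for m
      using that by (simp add: M_def)
    show "a m' = a m" if "m \<in> M \<inter> robust - ambiguous" "m' \<in> robust" "b m' = b m" for m m'
      using that unfolding ambiguous_def by blast
    show "card {x \<in> good. a x = a m \<and> b x = b m} \<le> card {x \<in> good. a x = \<pi> (b m) \<and> b x = b m}"
      if "m \<in> M \<inter> robust - ambiguous" for m
      using i by (intro plurality a_less sig_less_two_power) simp_all
  qed
  also have "{m \<in> good - robust. \<pi> (b m) = a m} = fragile - M"
    by (auto simp: M_def fragile_def)
  finally have unambiguous: "card (M \<inter> robust - ambiguous) \<le> card (fragile - M)" .
  have fin: "finite fragile" "finite ambiguous" "finite M"
    using robust_subset_good ambiguous_subset_robust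
    by (auto simp: fragile_def M_def intro: rev_finite_subset[OF finite_good])
  have "M \<subseteq> (M \<inter> fragile) \<union> ambiguous \<union> (M \<inter> robust - ambiguous)"
    by (auto simp: M_def fragile_def)
  hence "card M \<le> card ((M \<inter> fragile) \<union> ambiguous \<union> (M \<inter> robust - ambiguous))"
    using fin by (intro card_mono) auto
  also have "\<dots> \<le> card (M \<inter> fragile) + card ambiguous + card (M \<inter> robust - ambiguous)"
    using card_Un_le[of "M \<inter> fragile" ambiguous]
      card_Un_le[of "M \<inter> fragile \<union> ambiguous" "M \<inter> robust - ambiguous"] by linarith
  also have "\<dots> \<le> card fragile + card ambiguous"
    using unambiguous card_Int_Diff[OF fin(1), of M] by (simp add: Int_commute)
  finally show ?thesis by (simp add: M_def fragile_def)
qed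

end

theorem lemma3:
  fixes tailN headN :: "'e \<Rightarrow> 'v" and EN :: "'e set" and capN :: "'e \<Rightarrow> nat"
    and sN tN :: "nat \<Rightarrow> 'v" and k n i :: nat
    and enc :: "'e gedge \<Rightarrow> ('e gedge \<Rightarrow> nat) \<Rightarrow> nat \<Rightarrow> nat"
    and dec :: "(nat \<Rightarrow> nat) \<Rightarrow> nat"
    and \<epsilon> :: real and \<pi> :: "nat \<Rightarrow> nat"
  defines "Good \<equiv> good_msgs k n EN capN enc dec"
    and "a \<equiv> (\<lambda>m. gsig (gedges k EN) enc m (\<lambda>_. 0) (EdA i))"
    and "b \<equiv> (\<lambda>m. gsig (gedges k EN) enc m (\<lambda>_. 0) (EdB i))"
  assumes "finite EN"
    and "acyclicN tailN headN EN"
    and "is_code tailN headN EN capN sN tN k n enc"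
    and "\<epsilon> \<ge> 0"
    and "real (card Good) \<ge> (1 - \<epsilon>) * 2 ^ (k * n)"
    and "i \<in> {1..k}"
    and "\<forall>bh < 2 ^ n. \<pi> bh < 2 ^ n"
    and "\<forall>bh < 2 ^ n. \<forall>ah < 2 ^ n.
           card {m \<in> Good. a m = ah \<and> b m = bh} \<le> card {m \<in> Good. a m = \<pi> bh \<and> b m = bh}"
  shows "real (card {m \<in> Good. \<pi> (b m) \<noteq> a m}) \<le> 3 * \<epsilon> * 2 ^ (k * n)"
proof -
  interpret decoding_network tailN headN EN capN sN tN k n enc dec i
    using assms(4-6,9) by unfold_locales
  let ?X = "2 ^ (k * n) :: real"
  have "card {m \<in> Good. \<pi> (b m) \<noteq> a m} \<le> card (good - robust) + card ambiguous"
    unfolding Good_def a_def b_def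
    by (rule card_mismatch_le) (use assms(11) in \<open>simp add: Good_def a_def b_def\<close>)
  moreover have "card good + card (good - robust) \<le> 2 ^ (k * n)"
    and "card ambiguous + card good \<le> 2 ^ (k * n)"
    by (rule card_good_add_fragile card_ambiguous_add_good)+
  ultimately have "card {m \<in> Good. \<pi> (b m) \<noteq> a m} + 2 * card Good \<le> 2 * 2 ^ (k * n)"
    unfolding Good_def by linarith
  hence "real (card {m \<in> Good. \<pi> (b m) \<noteq> a m} + 2 * card Good) \<le> real (2 * 2 ^ (k * n))"
    by (rule of_nat_mono)
  hence "real (card {m \<in> Good. \<pi> (b m) \<noteq> a m}) + 2 * real (card Good) \<le> 2 * ?X"
    by simp
  moreover have "0 \<le> \<epsilon> * ?X" "(1 - \<epsilon>) * ?X = ?X - \<epsilon> * ?X" "3 * \<epsilon> * ?X = 3 * (\<epsilon> * ?X)"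
    using \<open>\<epsilon> \<ge> 0\<close> by (simp_all add: algebra_simps)
  ultimately show ?thesis using assms(8) by linarith
qed

end
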